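(* Suppose Assumption A2 holds and $F^*>-\infty$. Then Algorithm (2-RCD), with the pair $\{i_k,j_k\}$ drawn i.i.d. uniformly among the $N(N-1)/2$ unordered pairs of distinct indices, generates a sequence $x^k$ satisfying, for all $k\ge0$, $$\min_{0\le l\le k}E\left[\left(M_2(x^l,\Gamma)\right)^2\right]\le\frac{N\,(F(x^0)-F^* )}{k+1}.$$
   Context: Block structure: $n=\sum_{i=1}^N n_i$ with $N\ge2$, $I_n=[U_1\ \dots\ U_N]$, $x_i=U_i^Tx$, $\nabla_if(x)=U_i^T\nabla f(x)$, $a_i=U_i^Ta$; for $i\ne j$, $s_{ij}=[s_i^T\ s_j^T]^T$, $\nabla_{ij}f(x)=[\nabla_if(x)^T\ \nabla_jf(x)^T]^T$, and $x+s_{ij}$ means $x+U_is_i+U_js_j$. Problem: $F^*=\min\{F(x):=f(x)+h(x):\ a^Tx=b\}$ with $a\in\mathbb{R}^n$ nonzero. Assumption A2: (i) $f$ is differentiable and there are constants $L_{ij}=L_{ji}>0$ with $\|\nabla_{ij}f(x+U_is_i+U_js_j)-\nabla_{ij}f(x)\|\le L_{ij}\|s_{ij}\|$ for all $s_{ij}$, $x$, $i,j=1,\dots,N$; (ii) $h$ is proper, convex, continuous, $h(x)=\sum_{i=1}^n h_i(x_i)$ with each $h_i:\mathbb{R}\to\mathbb{R}$ convex. Algorithm (2-RCD): given $x^0$ with $a^Tx^0=b$, for $k\ge0$ choose randomly a pair $(i_k,j_k)$, $i_k\ne j_k$, compute $d_{i_kj_k}=\arg\min\{ f(x^k)+\langle\nabla_{i_kj_k}f(x^k),s_{i_kj_k}\rangle+\frac{L_{i_kj_k}}{2}\|s_{i_kj_k}\|^2+h(x^k+s_{i_kj_k})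 :\ a_{i_k}^Ts_{i_k}+a_{j_k}^Ts_{j_k}=0\}$, and set $x^{k+1}=x^k+U_{i_k}d_{i_k}+U_{j_k}d_{j_k}$. Notation: $\Gamma_i=\frac1N\sum_{j=1}^N L_{ij}$. For $\Lambda\in\mathbb{R}^N$ with positive entries, $\|x\|_\Lambda=(\sum_i\Lambda_i\|x_i\|^2)^{1/2}$, $\|y\|_\Lambda^*=(\sum_i\Lambda_i^{-1}\|y_i\|^2)^{1/2}$, $D_\Lambda=\mathrm{diag}(\Lambda_1I_{n_1},\dots,\Lambda_NI_{n_N})$, $S=\{s:a^Ts=0\}$, $d_\Lambda(x)=\arg\min_{s\in S} f(x)+\langle\nabla f(x),s\rangle+\frac12\|s\|_\Lambda^2+h(x+s)$. Optimality measure: $M_2(x,\Gamma)=\|D_\Gamma\,d_{N\Gamma}(x)\|_\Gamma^*$. *)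

theory Defs
  imports "HOL-Analysis.Analysis" "HOL-Probability.Probability_Mass_Function"
begin

text \<open>Block structure: coordinates of type 'n; blk c is the (0-based) index of the block
  containing coordinate c. Blocks are indexed by 0,...,N-1.\<close>

definition block_supp :: "('n \<Rightarrow> nat) \<Rightarrow> nat set \<Rightarrow> (real ^ 'n) set" where
  "block_supp blk P = {s. \<forall>c. blk c \<notin> P \<longrightarrow> s $ c = 0}"

text \<open>Restriction of a vector to the blocks in P (i.e. the stacked block vector, padded with zeros).\<close>
definition block_restrict :: "('n \<Rightarrow> nat) \<Rightarrow> nat set \<Rightarrow> real ^ 'n \<Rightarrow> real ^ 'n" where
  "block_restrict blk P v = (\<chi> c. if blk c \<in> P then v $ c else 0)"

definition argmin_on :: "'a set \<Rightarrow> ('a \<Rightarrow> real) \<Rightarrow> 'a" where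
  "argmin_on S \<phi> = (SOME s. s \<in> S \<and> (\<forall>t\<in>S. \<phi> s \<le> \<phi> t))"

definition wnorm :: "('n \<Rightarrow> nat) \<Rightarrow> (nat \<Rightarrow> real) \<Rightarrow> real ^ 'n \<Rightarrow> real" where
  "wnorm blk \<Lambda> x = sqrt (\<Sum>c\<in>UNIV. \<Lambda> (blk c) * (x $ c)^2)"

definition wnorm_dual :: "('n \<Rightarrow> nat) \<Rightarrow> (nat \<Rightarrow> real) \<Rightarrow> real ^ 'n \<Rightarrow> real" where
  "wnorm_dual blk \<Lambda> y = sqrt (\<Sum>c\<in>UNIV. (y $ c)^2 / \<Lambda> (blk c))"

definition Dmat :: "('n \<Rightarrow> nat) \<Rightarrow> (nat \<Rightarrow> real) \<Rightarrow> real ^ 'n \<Rightarrow> real ^ 'n" where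
  "Dmat blk \<Lambda> x = (\<chi> c. \<Lambda> (blk c) * x $ c)"

definition Gam :: "nat \<Rightarrow> (nat \<Rightarrow> nat \<Rightarrow> real) \<Rightarrow> nat \<Rightarrow> real" where
  "Gam N L i = (1 / real N) * (\<Sum>j<N. L i j)"

definition dLam :: "('n \<Rightarrow> nat) \<Rightarrow> (nat \<Rightarrow> real) \<Rightarrow> real ^ 'n \<Rightarrow> (real ^ 'n \<Rightarrow> real)
    \<Rightarrow> (real ^ 'n \<Rightarrow> real ^ 'n) \<Rightarrow> (real ^ 'n \<Rightarrow> real) \<Rightarrow> real ^ 'n \<Rightarrow> real ^ 'n" where
  "dLam blk \<Lambda> a f grad h x =
     argmin_on {s. a \<bullet> s = 0}
       (\<lambda>s. f x + grad x \<bullet> s + (1/2) * (wnorm blk \<Lambda> s)^2 + h (x + s))"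

definition M2 :: "nat \<Rightarrow> ('n \<Rightarrow> nat) \<Rightarrow> (nat \<Rightarrow> nat \<Rightarrow> real) \<Rightarrow> real ^ 'n \<Rightarrow> (real ^ 'n \<Rightarrow> real)
    \<Rightarrow> (real ^ 'n \<Rightarrow> real ^ 'n) \<Rightarrow> (real ^ 'n \<Rightarrow> real) \<Rightarrow> real ^ 'n \<Rightarrow> real" where
  "M2 N blk L a f grad h x =
     wnorm_dual blk (Gam N L)
       (Dmat blk (Gam N L) (dLam blk (\<lambda>i. real N * Gam N L i) a f grad h x))"

definition pair_dir :: "('n \<Rightarrow> nat) \<Rightarrow> (nat \<Rightarrow> nat \<Rightarrow> real) \<Rightarrow> real ^ 'n \<Rightarrow> (real ^ 'n \<Rightarrow> real)
    \<Rightarrow> (real ^ 'n \<Rightarrow> real ^ 'n) \<Rightarrow> (real ^ 'n \<Rightarrow> real) \<Rightarrow> real ^ 'n \<Rightarrow> nat \<times> nat \<Rightarrow> real ^ 'n" where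
  "pair_dir blk L a f grad h x p =
     (case p of (i, j) \<Rightarrow>
        argmin_on (block_supp blk {i, j} \<inter> {s. a \<bullet> s = 0})
          (\<lambda>s. f x + grad x \<bullet> s + (L i j / 2) * (norm s)^2 + h (x + s)))"

text \<open>Uniform distribution over the N(N-1)/2 unordered pairs {i,j}, i \<noteq> j,
  each represented as (i,j) with i < j.\<close>
definition pair_pmf :: "nat \<Rightarrow> (nat \<times> nat) pmf" where
  "pair_pmf N = pmf_of_set {(i, j). i < j \<and> j < N}"

primrec rcd_iter :: "nat \<Rightarrow> ('n \<Rightarrow> nat) \<Rightarrow> (nat \<Rightarrow> nat \<Rightarrow> real) \<Rightarrow> real ^ 'n \<Rightarrow> (real ^ 'n \<Rightarrow> real)
    \<Rightarrow> (real ^ 'n \<Rightarrow> real ^ 'n) \<Rightarrow> (real ^ 'n \<Rightarrow> real) \<Rightarrow> real ^ 'n \<Rightarrow> nat \<Rightarrow> (real ^ 'n) pmf" where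
  "rcd_iter N blk L a f grad h x0 0 = return_pmf x0"
| "rcd_iter N blk L a f grad h x0 (Suc k) =
     bind_pmf (rcd_iter N blk L a f grad h x0 k)
       (\<lambda>x. map_pmf (\<lambda>p. x + pair_dir blk L a f grad h x p) (pair_pmf N))"

end

theory Submission
  imports Defs
begin

text \<open>
  Let d = d_{N Gamma}(x) minimise the full model over a^T s = 0. Comparing d with (1 - t) d and
  using convexity of h, the linearised decrease satisfies
  <grad f(x), d> + h(x + d) - h(x) <= -||d||^2_{N Gamma}.
  The block residuals r_i = a_i^T d_i sum to zero, so there are weights theta_ij in [0, 1] with
  sum_{j /= i} theta_ij = 1 that make every theta_ij d_i + theta_ji d_j feasible for the pair (i, j).
  By the descent lemma the 2-RCD step on (i, j) does at least as well as this piece, and by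
  convexity the pieces share out the decrease of d; as sum_j theta_ij L_ij <= N Gamma_i, averaging
  over the pairs gives E F(x^+) <= F(x) - M_2(x, Gamma)^2 / N. Telescoping and F >= F^* on the
  feasible set finish the proof.
\<close>

lemma convex_on_real_zero_between:
  fixes q :: "real \<Rightarrow> real"
  assumes q: "convex_on UNIV q" and u: "u < 0" and v: "0 < v"
  shows "(v - u) * q 0 \<le> v * q u - u * q v"
proof -
  define t where "t = - u / (v - u)"
  have t: "0 \<le> t" "t \<le> 1" "(1 - t) * u + t * v = 0" "(v - u) * (1 - t) = v" "(v - u) * t = - u"
    using u v by (auto simp: t_def field_simps)
  have "(v - u) * q 0 \<le> (v - u) * ((1 - t) * q u + t * q v)"
    using convex_onD[OF q, of t u v] t u v by simp
  also have "\<dots> = ((v - u) * (1 - t)) * q u + ((v - u) * t) * q v"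
    by (simp add: algebra_simps)
  finally show ?thesis
    using t by simp
qed

lemma convex_on_real_abs_minorant:
  fixes q :: "real \<Rightarrow> real"
  assumes q: "convex_on UNIV q"
  obtains C where "C \<ge> 0" "\<And>y. q 0 - C * \<bar>y\<bar> \<le> q y"
proof
  define C where "C = \<bar>q 0 - q (-1)\<bar> + \<bar>q 1 - q 0\<bar>"
  show "C \<ge> 0" unfolding C_def by simp
  fix y :: real
  consider "y > 0" | "y < 0" | "y = 0" by linarith
  then show "q 0 - C * \<bar>y\<bar> \<le> q y"
  proof cases
    case 1
    have "(y + 1) * q 0 \<le> y * q (-1) + q y"
      using convex_on_real_zero_between[OF q, of "-1" y] 1 by simp
    moreover have "y * (- C) \<le> y * (q 0 - q (-1))"
      using 1 by (intro mult_left_mono) (auto simp: C_def)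
    ultimately show ?thesis using 1 by (simp add: algebra_simps)
  next
    case 2
    have "(1 - y) * q 0 \<le> q y - y * q 1"
      using convex_on_real_zero_between[OF q, of y 1] 2 by simp
    moreover have "y * C \<le> y * (q 1 - q 0)"
      using 2 by (intro mult_left_mono_neg) (auto simp: C_def)
    ultimately show ?thesis using 2 by (simp add: algebra_simps)
  qed simp
qed

lemma separable_convex_norm_minorant:
  fixes hc :: "'n::finite \<Rightarrow> real \<Rightarrow> real"
  assumes "\<And>c. convex_on UNIV (hc c)"
  obtains c0 C where "C \<ge> 0" "\<And>z :: real ^ 'n. c0 - C * norm z \<le> (\<Sum>c\<in>UNIV. hc c (z $ c))"
proof -
  have "\<exists>C\<ge>0. \<forall>y. hc c 0 - C * \<bar>y\<bar> \<le> hc c y" for c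
    by (rule convex_on_real_abs_minorant[OF assms[of c]]) blast
  then obtain C where C: "\<And>c. C c \<ge> 0" "\<And>c y. hc c 0 - C c * \<bar>y\<bar> \<le> hc c y"
    by metis
  have "(\<Sum>c\<in>UNIV. hc c 0) - (\<Sum>c\<in>UNIV. C c) * norm z \<le> (\<Sum>c\<in>UNIV. hc c (z $ c))"
    for z :: "real ^ 'n"
  proof -
    have "hc c 0 - C c * norm z \<le> hc c (z $ c)" for c
      using C(2)[of c "z $ c"] mult_left_mono[OF component_le_norm_cart[of z c] C(1)[of c]]
      by linarith
    then show ?thesis
      by (simp add: sum_distrib_right sum_subtractf[symmetric] sum_mono)
  qed
  then show thesis
    using that C(1) by (meson sum_nonneg)
qed

lemma continuous_on_separable_convex:
  fixes hc :: "'n::finite \<Rightarrow> real \<Rightarrow> real"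
  assumes "\<And>c. convex_on UNIV (hc c)"
  shows "continuous_on UNIV (\<lambda>z :: real ^ 'n. \<Sum>c\<in>UNIV. hc c (z $ c))"
proof -
  have "continuous_on UNIV (\<lambda>z :: real ^ 'n. hc c (z $ c))" for c
    by (intro continuous_on_compose2[OF convex_on_continuous[OF open_UNIV assms]]
        continuous_intros) auto
  then show ?thesis
    by (rule continuous_on_sum)
qed

lemma argmin_onI:
  assumes "s \<in> K" "\<forall>t\<in>K. \<phi> s \<le> \<phi> t"
  shows "argmin_on K \<phi> \<in> K \<and> (\<forall>t\<in>K. \<phi> (argmin_on K \<phi>) \<le> \<phi> t)"
  unfolding argmin_on_def by (rule someI[of _ s]) (use assms in blast)

lemma coercive_sublevel_norm_bound:
  fixes n \<mu> :: real
  assumes \<mu>: "\<mu> > 0" and n: "n \<ge> 0" and sub: "\<mu> * n\<^sup>2 - C * n \<le> d"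
  shows "n \<le> (\<bar>C\<bar> + \<bar>d\<bar>) / \<mu> + 1"
proof (rule ccontr)
  assume "\<not> ?thesis"
  then have big: "\<mu> * n > \<bar>C\<bar> + \<bar>d\<bar> + \<mu>"
    using \<mu> by (simp add: field_simps)
  then have n1: "n \<ge> 1"
    using \<mu> by (smt (verit) mult_le_cancel_left1)
  have "C * n \<le> n * \<bar>C\<bar>"
    using n by (metis abs_ge_self mult.commute mult_left_mono)
  moreover have "d \<le> n * \<bar>d\<bar>"
    using n1 mult_right_mono[of 1 n "\<bar>d\<bar>"] by simp
  ultimately have "\<mu> * n\<^sup>2 \<le> n * \<bar>C\<bar> + n * \<bar>d\<bar>"
    using sub by linarith
  also have "\<dots> < n * (\<mu> * n)"
    using big n1 \<mu> by (simp add: distrib_left[symmetric])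
  finally show False
    by (simp add: power2_eq_square mult.commute mult.left_commute)
qed

lemma coercive_attains_min:
  fixes \<phi> :: "'a::{real_normed_vector,heine_borel} \<Rightarrow> real"
  assumes "closed K" "z \<in> K" "continuous_on UNIV \<phi>" "\<mu> > 0"
    and lower: "\<And>s. c - C * norm s + \<mu> * (norm s)\<^sup>2 \<le> \<phi> s"
  shows "\<exists>s\<in>K. \<forall>t\<in>K. \<phi> s \<le> \<phi> t"
proof -
  define S where "S = K \<inter> {s. \<phi> s \<le> \<phi> z}"
  have "closed S"
    unfolding S_def using assms(1,3) by (intro closed_Int closed_Collect_le continuous_intros) auto
  moreover have "bounded S"
  proof -
    have "norm s \<le> (\<bar>C\<bar> + \<bar>\<phi> z - c\<bar>) / \<mu> + 1" if "s \<in> S" for s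
      using that lower[of s] assms(4) by (intro coercive_sublevel_norm_bound) (auto simp: S_def)
    then show ?thesis unfolding bounded_iff by blast
  qed
  ultimately have "compact S" by (simp add: compact_eq_bounded_closed)
  moreover have z: "z \<in> S" using assms(2) by (simp add: S_def)
  ultimately obtain m where m: "m \<in> S" "\<forall>t\<in>S. \<phi> m \<le> \<phi> t"
    using continuous_attains_inf[of S \<phi>] continuous_on_subset[OF assms(3)] by blast
  have "\<phi> m \<le> \<phi> t" if "t \<in> K" for t
  proof (cases "\<phi> t \<le> \<phi> z")
    case False
    then show ?thesis using m(2) z by force
  qed (use that m in \<open>auto simp: S_def\<close>)
  then show ?thesis
    using m(1) by (auto simp: S_def)
qed

lemma power2_norm_vec: "(norm (s :: real ^ 'n::finite))\<^sup>2 = (\<Sum>c\<in>UNIV. (s $ c)\<^sup>2)"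
  unfolding power2_norm_eq_inner inner_vec_def by (simp add: power2_eq_square)

lemma block_supp_scaleR: "s \<in> block_supp blk P \<Longrightarrow> t *\<^sub>R s \<in> block_supp blk P"
  by (simp add: block_supp_def)

lemma closed_block_supp: "closed (block_supp blk P)"
  unfolding block_supp_def by (rule closed_substandard_cart)

lemma inner_block_restrict:
  "s \<in> block_supp blk P \<Longrightarrow> v \<bullet> s = block_restrict blk P v \<bullet> s"
  unfolding inner_vec_def block_restrict_def block_supp_def by (intro sum.cong) auto

lemma block_lipschitz_descent:
  fixes f :: "real ^ 'n::finite \<Rightarrow> real"
  assumes grad: "\<And>x. (f has_derivative (\<lambda>v. grad x \<bullet> v)) (at x)"
    and lip: "\<And>x s. s \<in> block_supp blk P \<Longrightarrow>
                 norm (block_restrict blk P (grad (x + s) - grad x)) \<le> Lc * norm s"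
    and s: "s \<in> block_supp blk P"
  shows "f (x + s) \<le> f x + grad x \<bullet> s + Lc / 2 * (norm s)\<^sup>2"
proof -
  define w where "w t = f (x + t *\<^sub>R s) - t * (grad x \<bullet> s) - Lc / 2 * t\<^sup>2 * (norm s)\<^sup>2" for t
  have w': "DERIV w t :> grad (x + t *\<^sub>R s) \<bullet> s - grad x \<bullet> s - Lc * t * (norm s)\<^sup>2" for t
  proof -
    have "((\<lambda>t. f (x + t *\<^sub>R s)) has_derivative (\<lambda>u. grad (x + t *\<^sub>R s) \<bullet> (u *\<^sub>R s))) (at t)"
      by (rule has_derivative_compose[OF _ grad]) (auto intro!: derivative_eq_intros)
    then have "DERIV (\<lambda>t. f (x + t *\<^sub>R s)) t :> grad (x + t *\<^sub>R s) \<bullet> s"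
      by (simp add: has_field_derivative_def mult_commute_abs)
    then show ?thesis
      unfolding w_def by (auto intro!: derivative_eq_intros)
  qed
  have w'_nonpos: "grad (x + t *\<^sub>R s) \<bullet> s - grad x \<bullet> s - Lc * t * (norm s)\<^sup>2 \<le> 0"
    if "0 \<le> t" for t
  proof -
    have "(grad (x + t *\<^sub>R s) - grad x) \<bullet> s
        = block_restrict blk P (grad (x + t *\<^sub>R s) - grad x) \<bullet> s"
      by (rule inner_block_restrict[OF s])
    also have "\<dots> \<le> norm (block_restrict blk P (grad (x + t *\<^sub>R s) - grad x)) * norm s"
      by (rule norm_cauchy_schwarz)
    also have "\<dots> \<le> Lc * norm (t *\<^sub>R s) * norm s"
      using lip[OF block_supp_scaleR[OF s]] by (intro mult_right_mono) auto
    also have "\<dots> = Lc * t * (norm s)\<^sup>2"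
      using that by (simp add: power2_eq_square)
    finally show ?thesis
      by (simp add: inner_diff_left)
  qed
  have "w 1 \<le> w 0"
  proof (rule DERIV_nonpos_imp_nonincreasing[of 0 1 w])
    fix t :: real
    assume "0 \<le> t" "t \<le> 1"
    then show "\<exists>y. DERIV w t :> y \<and> y \<le> 0"
      using w' w'_nonpos by blast
  qed simp
  then show ?thesis
    unfolding w_def by simp
qed

text \<open>Applied to a minimiser \<open>d\<close> of a model with linear part \<open>A\<close> and quadratic part \<open>B/2\<close>,
  compared with \<open>(1 - t) d\<close>.\<close>
lemma scaling_optimality_margin:
  fixes A B :: real
  assumes B: "B \<ge> 0"
    and opt: "\<And>t. 0 < t \<Longrightarrow> t \<le> 1 \<Longrightarrow> A + B / 2 \<le> (1 - t) * A + (1 - t)\<^sup>2 * B / 2"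
  shows "A \<le> - B"
proof (rule ccontr)
  assume "\<not> A \<le> - B"
  then have AB: "A + B > 0" by simp
  have bound: "A \<le> (t / 2 - 1) * B" if "0 < t" "t \<le> 1" for t
  proof -
    have "t * A \<le> t * ((t / 2 - 1) * B)"
      using opt[OF that] by (simp add: power2_eq_square algebra_simps)
    then show ?thesis using that by simp
  qed
  show False
  proof (cases "B = 0")
    case True
    then show ?thesis using bound[of 1] AB by simp
  next
    case False
    define t where "t = min 1 ((A + B) / B)"
    have t: "0 < t" "t \<le> 1" "t * B \<le> A + B"
      using AB B False by (auto simp: t_def min_def field_simps)
    then have "A \<le> - B + (A + B) / 2"
      using bound[OF t(1,2)] by (simp add: algebra_simps)
    then show False using AB by simp
  qed
qed

text \<open>Positive residuals are matched with negative ones in proportion to their size, so that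
  \<open>\<theta>\<^sub>i\<^sub>j r\<^sub>i + \<theta>\<^sub>j\<^sub>i r\<^sub>j = 0\<close>; a zero residual spreads its weight evenly.\<close>
definition balancing_weight :: "nat \<Rightarrow> (nat \<Rightarrow> real) \<Rightarrow> nat \<Rightarrow> nat \<Rightarrow> real" where
  "balancing_weight N r i j =
     (if r i = 0 then 1 / (real N - 1)
      else if r i * r j < 0 then \<bar>r j\<bar> / (\<Sum>k<N. max (r k) 0) else 0)"

context
  fixes N :: nat and r :: "nat \<Rightarrow> real"
  assumes N: "N \<ge> 2" and sum_zero: "(\<Sum>i<N. r i) = 0"
begin

lemma sum_neg_part_eq_sum_pos_part: "(\<Sum>i<N. max (- r i) 0) = (\<Sum>i<N. max (r i) 0)"
proof -
  have "(\<Sum>i<N. r i) = (\<Sum>i<N. max (r i) 0) - (\<Sum>i<N. max (- r i) 0)"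
    by (simp add: sum_subtractf[symmetric] max_def) (intro sum.cong; simp)
  then show ?thesis using sum_zero by simp
qed

lemma abs_le_sum_pos_part: "j < N \<Longrightarrow> \<bar>r j\<bar> \<le> (\<Sum>k<N. max (r k) 0)"
  using member_le_sum[of j "{..<N}" "\<lambda>k. max (r k) 0"]
    member_le_sum[of j "{..<N}" "\<lambda>k. max (- r k) 0"]
  by (auto simp: sum_neg_part_eq_sum_pos_part)

lemma balancing_weight_bounds:
  "j < N \<Longrightarrow> 0 \<le> balancing_weight N r i j \<and> balancing_weight N r i j \<le> 1"
  using abs_le_sum_pos_part[of j] N by (auto simp: balancing_weight_def divide_le_eq_1)

lemma balancing_weight_row_sum:
  assumes i: "i < N"
  shows "(\<Sum>j\<in>{..<N} - {i}. balancing_weight N r i j) = 1"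
proof -
  define R where "R = (\<Sum>k<N. max (r k) 0)"
  consider "r i = 0" | "r i > 0" | "r i < 0" by linarith
  then show ?thesis
  proof cases
    case 1
    then show ?thesis using i N by (simp add: balancing_weight_def)
  next
    case 2
    then have "R > 0"
      using i member_le_sum[of i "{..<N}" "\<lambda>k. max (r k) 0"] by (auto simp: R_def)
    have "(\<Sum>j\<in>{..<N} - {i}. balancing_weight N r i j) = (\<Sum>j\<in>{..<N} - {i}. max (- r j) 0 / R)"
      using 2 by (intro sum.cong) (auto simp: balancing_weight_def R_def mult_less_0_iff)
    also have "\<dots> = (\<Sum>j<N. max (- r j) 0) / R"
      using i 2 by (simp add: sum_divide_distrib sum.remove[of "{..<N}" i])
    finally show ?thesis
      using \<open>R > 0\<close> by (simp add: sum_neg_part_eq_sum_pos_part R_def)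
  next
    case 3
    then have "R > 0"
      using i member_le_sum[of i "{..<N}" "\<lambda>k. max (- r k) 0"]
      by (auto simp: R_def sum_neg_part_eq_sum_pos_part[symmetric])
    have "(\<Sum>j\<in>{..<N} - {i}. balancing_weight N r i j) = (\<Sum>j\<in>{..<N} - {i}. max (r j) 0 / R)"
      using 3 by (intro sum.cong) (auto simp: balancing_weight_def R_def mult_less_0_iff)
    also have "\<dots> = (\<Sum>j<N. max (r j) 0) / R"
      using i 3 by (simp add: sum_divide_distrib sum.remove[of "{..<N}" i])
    finally show ?thesis
      using \<open>R > 0\<close> by (simp add: R_def)
  qed
qed

end

lemma balancing_weight_cancel:
  "balancing_weight N r i j * r i + balancing_weight N r j i * r j = 0"
proof -
  consider "r i = 0" | "r j = 0" | "r i * r j < 0" | "r i * r j > 0"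
    by (metis linorder_neqE_linordered_idom mult_eq_0_iff)
  then show ?thesis
  proof cases
    case 3
    then have "\<bar>r j\<bar> * r i + \<bar>r i\<bar> * r j = 0"
      by (cases "r i > 0") (auto simp: mult_less_0_iff)
    then show ?thesis
      using 3 by (auto simp: balancing_weight_def mult.commute[of "r j"] add_divide_distrib[symmetric])
  next
    case 4
    then show ?thesis by (auto simp: balancing_weight_def mult.commute[of "r j"])
  qed (auto simp: balancing_weight_def)
qed

lemma sum_offdiag_swap:
  fixes N :: nat and g :: "nat \<Rightarrow> nat \<Rightarrow> real"
  shows "(\<Sum>i<N. \<Sum>j\<in>{..<N} - {i}. g j i) = (\<Sum>i<N. \<Sum>j\<in>{..<N} - {i}. g i j)"
proof -
  have "{..<N} - {i} = {j. j \<in> {..<N} \<and> j \<noteq> i}" for i :: nat by auto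
  moreover have "{..<N} - {j} = {i. i \<in> {..<N} \<and> i \<noteq> j}" for j :: nat by auto
  ultimately show ?thesis
    using sum.swap_restrict[of "{..<N}" "{..<N}" "\<lambda>i j. g j i" "\<lambda>i j. j \<noteq> i"]
    by (simp add: eq_commute[of "_ :: nat"])
qed

lemma sum_offdiag_symmetric:
  fixes N :: nat and g :: "nat \<Rightarrow> nat \<Rightarrow> real"
  assumes sym: "\<And>i j. i < N \<Longrightarrow> j < N \<Longrightarrow> g i j = g j i"
  shows "(\<Sum>i<N. \<Sum>j\<in>{..<N} - {i}. g i j) = 2 * (\<Sum>(i, j)\<in>{(i, j). i < j \<and> j < N}. g i j)"
proof -
  define P where "P = {(i, j). i < j \<and> j < N}"
  have fin: "finite P"
    by (rule finite_subset[of _ "{..<N} \<times> {..<N}"]) (auto simp: P_def)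
  have split: "Sigma {..<N} (\<lambda>i. {..<N} - {i}) = P \<union> prod.swap ` P"
    by (auto simp: P_def image_iff)
  have disj: "P \<inter> prod.swap ` P = {}"
    by (auto simp: P_def)
  have "(\<Sum>p\<in>prod.swap ` P. case_prod g p) = (\<Sum>p\<in>P. case_prod g (prod.swap p))"
    by (subst sum.reindex) (auto intro: inj_onI)
  also have "\<dots> = (\<Sum>p\<in>P. case_prod g p)"
    using sym by (intro sum.cong) (auto simp: P_def)
  finally have swapped: "(\<Sum>p\<in>prod.swap ` P. case_prod g p) = (\<Sum>p\<in>P. case_prod g p)" .
  have "(\<Sum>i<N. \<Sum>j\<in>{..<N} - {i}. g i j) = (\<Sum>p\<in>Sigma {..<N} (\<lambda>i. {..<N} - {i}). case_prod g p)"
    by (simp add: sum.Sigma)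
  also have "\<dots> = (\<Sum>p\<in>P. case_prod g p) + (\<Sum>p\<in>prod.swap ` P. case_prod g p)"
    unfolding split using fin disj by (simp add: sum.union_disjoint)
  finally show ?thesis
    using swapped by (simp add: P_def)
qed

lemma card_increasing_pairs:
  fixes N :: nat
  shows "2 * real (card {(i, j). i < j \<and> j < N}) = real N * (real N - 1)"
proof -
  have "real N * (real N - 1) = (\<Sum>i<N. \<Sum>j\<in>{..<N} - {i}. 1 :: real)"
    by simp
  also have "\<dots> = 2 * (\<Sum>(i, j)\<in>{(i, j). i < j \<and> j < N}. 1 :: real)"
    by (rule sum_offdiag_symmetric) simp
  finally show ?thesis by simp
qed

lemma expectation_bind_pmf_finite:
  fixes g :: "'b \<Rightarrow> real"
  assumes M: "finite (set_pmf M)" and K: "\<And>x. x \<in> set_pmf M \<Longrightarrow> finite (set_pmf (K x))"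
  shows "measure_pmf.expectation (bind_pmf M K) g
       = measure_pmf.expectation M (\<lambda>x. measure_pmf.expectation (K x) g)"
proof -
  define B where "B = (\<Union>x\<in>set_pmf M. set_pmf (K x))"
  have B: "finite B" using M K by (simp add: B_def)
  have inner: "measure_pmf.expectation (K x) g = (\<Sum>y\<in>B. g y * pmf (K x) y)" if "x \<in> set_pmf M" for x
    using that by (intro integral_measure_pmf_real[OF B]) (auto simp: B_def)
  have "measure_pmf.expectation (bind_pmf M K) g = (\<Sum>y\<in>B. g y * pmf (bind_pmf M K) y)"
    by (rule integral_measure_pmf_real[OF B]) (auto simp: B_def)
  also have "\<dots> = (\<Sum>y\<in>B. \<Sum>x\<in>set_pmf M. g y * pmf (K x) y * pmf M x)"
    by (simp add: pmf_bind integral_measure_pmf_real[OF M] sum_distrib_left mult.assoc)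
  also have "\<dots> = (\<Sum>x\<in>set_pmf M. (\<Sum>y\<in>B. g y * pmf (K x) y) * pmf M x)"
    by (subst sum.swap) (simp add: sum_distrib_right)
  also have "\<dots> = measure_pmf.expectation M (\<lambda>x. measure_pmf.expectation (K x) g)"
    using inner by (simp add: integral_measure_pmf_real[OF M])
  finally show ?thesis .
qed

lemma sum_two_blocks:
  fixes blk :: "'n::finite \<Rightarrow> nat" and g :: "'n \<Rightarrow> real"
  assumes "i \<noteq> j"
  shows "(\<Sum>c\<in>UNIV. (if blk c = i then \<alpha> else if blk c = j then \<beta> else 0) * g c)
       = \<alpha> * (\<Sum>c\<in>{c. blk c = i}. g c) + \<beta> * (\<Sum>c\<in>{c. blk c = j}. g c)"
proof -
  have "(\<Sum>c\<in>UNIV. (if blk c = i then \<alpha> else if blk c = j then \<beta> else 0) * g c)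
      = (\<Sum>c\<in>UNIV. (if blk c = i then \<alpha> * g c else 0) + (if blk c = j then \<beta> * g c else 0))"
    using assms by (intro sum.cong) auto
  then show ?thesis
    by (simp add: sum.distrib sum.inter_filter[symmetric] sum_distrib_left)
qed

locale rcd_problem =
  fixes N :: nat and blk :: "'n::finite \<Rightarrow> nat"
    and f :: "real ^ 'n \<Rightarrow> real" and grad :: "real ^ 'n \<Rightarrow> real ^ 'n"
    and h :: "real ^ 'n \<Rightarrow> real" and hc :: "'n \<Rightarrow> real \<Rightarrow> real"
    and L :: "nat \<Rightarrow> nat \<Rightarrow> real" and a :: "real ^ 'n"
  assumes N2: "N \<ge> 2"
    and blk_range: "\<And>c. blk c < N"
    and grad: "\<And>x. (f has_derivative (\<lambda>v. grad x \<bullet> v)) (at x)"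
    and L_pos: "\<And>i j. i < N \<Longrightarrow> j < N \<Longrightarrow> L i j > 0"
    and L_sym: "\<And>i j. i < N \<Longrightarrow> j < N \<Longrightarrow> L i j = L j i"
    and L_lip: "\<And>i j x s. i < N \<Longrightarrow> j < N \<Longrightarrow> s \<in> block_supp blk {i, j} \<Longrightarrow>
        norm (block_restrict blk {i, j} (grad (x + s) - grad x)) \<le> L i j * norm s"
    and h_sep: "\<And>x. h x = (\<Sum>c\<in>UNIV. hc c (x $ c))"
    and hc_convex: "\<And>c. convex_on UNIV (hc c)"
begin

definition NGam :: "nat \<Rightarrow> real" where
  "NGam i = real N * Gam N L i"

lemma NGam_eq_row_sum: "i < N \<Longrightarrow> NGam i = (\<Sum>j<N. L i j)"
  using N2 by (simp add: NGam_def Gam_def)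

lemma NGam_pos: "i < N \<Longrightarrow> NGam i > 0"
  using L_pos N2 by (auto simp: NGam_eq_row_sum intro!: sum_pos)

definition model :: "real ^ 'n \<Rightarrow> real ^ 'n \<Rightarrow> real" where
  "model x s = f x + grad x \<bullet> s + 1 / 2 * (wnorm blk NGam s)\<^sup>2 + h (x + s)"

definition pair_model :: "real ^ 'n \<Rightarrow> nat \<Rightarrow> nat \<Rightarrow> real ^ 'n \<Rightarrow> real" where
  "pair_model x i j s = f x + grad x \<bullet> s + L i j / 2 * (norm s)\<^sup>2 + h (x + s)"

definition dir :: "real ^ 'n \<Rightarrow> real ^ 'n" where
  "dir x = dLam blk NGam a f grad h x"

definition pdir :: "real ^ 'n \<Rightarrow> nat \<times> nat \<Rightarrow> real ^ 'n" where
  "pdir x p = pair_dir blk L a f grad h x p"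

lemma wnorm_NGam_sq: "(wnorm blk NGam s)\<^sup>2 = (\<Sum>c\<in>UNIV. NGam (blk c) * (s $ c)\<^sup>2)"
  unfolding wnorm_def
  by (intro real_sqrt_pow2 sum_nonneg mult_nonneg_nonneg) (auto intro: less_imp_le NGam_pos blk_range)

lemma linear_part_minorant:
  obtains c C where "\<And>s. c - C * norm s \<le> f x + grad x \<bullet> s + h (x + s)"
proof -
  obtain c0 C where C: "C \<ge> 0" "\<And>z. c0 - C * norm z \<le> h z"
    unfolding h_sep by (rule separable_convex_norm_minorant[where hc = hc, OF hc_convex]) blast
  have "(f x + c0 - C * norm x) - (norm (grad x) + C) * norm s \<le> f x + grad x \<bullet> s + h (x + s)" for s
  proof -
    have "- (norm (grad x) * norm s) \<le> grad x \<bullet> s"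
      using norm_cauchy_schwarz[of "- grad x" s] by simp
    moreover have "C * norm (x + s) \<le> C * norm x + C * norm s"
      using mult_left_mono[OF norm_triangle_ineq C(1)] by (simp add: distrib_left)
    ultimately show ?thesis
      using C(2)[of "x + s"] by (simp add: distrib_right)
  qed
  then show thesis by (rule that)
qed

lemma continuous_on_shifted_h: "continuous_on UNIV (\<lambda>s. h (x + s))"
proof -
  have "continuous_on UNIV h"
    unfolding h_sep[abs_def] by (rule continuous_on_separable_convex[OF hc_convex])
  then show ?thesis
    by (rule continuous_on_compose2) (auto intro!: continuous_intros)
qed

lemma dir_minimal:
  "a \<bullet> dir x = 0 \<and> (\<forall>t. a \<bullet> t = 0 \<longrightarrow> model x (dir x) \<le> model x t)"
proof -
  obtain c C where lin: "\<And>s. c - C * norm s \<le> f x + grad x \<bullet> s + h (x + s)"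
    using linear_part_minorant by blast
  define m where "m = Min (NGam ` {..<N})"
  have "m > 0"
    using NGam_pos N2 unfolding m_def by (subst Min_gr_iff) (auto simp: lessThan_empty_iff)
  have wq: "m * (norm s)\<^sup>2 \<le> (wnorm blk NGam s)\<^sup>2" for s
  proof -
    have "m \<le> NGam (blk c)" for c
      using blk_range[of c] by (auto simp: m_def)
    then show ?thesis
      unfolding power2_norm_vec wnorm_NGam_sq sum_distrib_left by (intro sum_mono mult_right_mono) auto
  qed
  have lower: "c - C * norm s + m / 2 * (norm s)\<^sup>2 \<le> model x s" for s
    using lin[of s] wq[of s] unfolding model_def by linarith
  have cont: "continuous_on UNIV (model x)"
    unfolding model_def wnorm_def by (intro continuous_intros continuous_on_shifted_h)
  have "\<exists>s\<in>{s. a \<bullet> s = 0}. \<forall>t\<in>{s. a \<bullet> s = 0}. model x s \<le> model x t"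
    using \<open>m > 0\<close> by (intro coercive_attains_min[OF closed_hyperplane _ cont _ lower, where z = 0]) auto
  then obtain s where "s \<in> {s. a \<bullet> s = 0}" "\<forall>t\<in>{s. a \<bullet> s = 0}. model x s \<le> model x t"
    by blast
  moreover have "dir x = argmin_on {s. a \<bullet> s = 0} (model x)"
    by (simp add: dir_def dLam_def model_def[abs_def])
  ultimately show ?thesis
    using argmin_onI[of s "{s. a \<bullet> s = 0}" "model x"] by simp
qed

lemma pdir_minimal:
  assumes "i < N" "j < N"
  shows "pdir x (i, j) \<in> block_supp blk {i, j} \<and> a \<bullet> pdir x (i, j) = 0 \<and>
    (\<forall>t\<in>block_supp blk {i, j}. a \<bullet> t = 0 \<longrightarrow> pair_model x i j (pdir x (i, j)) \<le> pair_model x i j t)"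
proof -
  define K where "K = block_supp blk {i, j} \<inter> {s. a \<bullet> s = 0}"
  obtain c C where lin: "\<And>s. c - C * norm s \<le> f x + grad x \<bullet> s + h (x + s)"
    using linear_part_minorant by blast
  have lower: "c - C * norm s + L i j / 2 * (norm s)\<^sup>2 \<le> pair_model x i j s" for s
    using lin[of s] by (simp add: pair_model_def)
  have cont: "continuous_on UNIV (pair_model x i j)"
    unfolding pair_model_def by (intro continuous_intros continuous_on_shifted_h)
  have "closed K"
    unfolding K_def by (intro closed_Int closed_block_supp closed_hyperplane)
  then have "\<exists>s\<in>K. \<forall>t\<in>K. pair_model x i j s \<le> pair_model x i j t"
    using L_pos[OF assms]
    by (intro coercive_attains_min[OF _ _ cont _ lower, where z = 0]) (auto simp: K_def block_supp_def)
  then obtain s where "s \<in> K" "\<forall>t\<in>K. pair_model x i j s \<le> pair_model x i j t"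
    by blast
  moreover have "pdir x (i, j) = argmin_on K (pair_model x i j)"
    by (simp add: pdir_def pair_dir_def pair_model_def[abs_def] K_def)
  ultimately show ?thesis
    using argmin_onI[of s K "pair_model x i j"] by (simp add: K_def)
qed

definition coord_incr :: "real ^ 'n \<Rightarrow> real \<Rightarrow> 'n \<Rightarrow> real \<Rightarrow> real" where
  "coord_incr x Lc c t = grad x $ c * t + Lc / 2 * t\<^sup>2 + (hc c (x $ c + t) - hc c (x $ c))"

lemma coord_incr_split: "coord_incr x Lc c t = coord_incr x 0 c t + Lc / 2 * t\<^sup>2"
  by (simp add: coord_incr_def)

lemma coord_incr_scaled:
  assumes "0 \<le> \<kappa>" "\<kappa> \<le> 1"
  shows "coord_incr x Lc c (\<kappa> * t) \<le> \<kappa> * coord_incr x 0 c t + \<kappa>\<^sup>2 * (Lc / 2 * t\<^sup>2)"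
proof -
  have "hc c ((1 - \<kappa>) * x $ c + \<kappa> * (x $ c + t)) \<le> (1 - \<kappa>) * hc c (x $ c) + \<kappa> * hc c (x $ c + t)"
    using convex_onD[OF hc_convex assms] by simp
  then show ?thesis
    by (simp add: coord_incr_def algebra_simps power_mult_distrib)
qed

lemma sum_coord_incr:
  "(\<Sum>c\<in>UNIV. coord_incr x (\<Lambda> c) c (s $ c))
     = grad x \<bullet> s + (\<Sum>c\<in>UNIV. \<Lambda> c / 2 * (s $ c)\<^sup>2) + (h (x + s) - h x)"
  by (simp add: coord_incr_def h_sep inner_vec_def sum.distrib sum_subtractf)

lemma model_eq_sum_coord_incr:
  "model x s = f x + h x + (\<Sum>c\<in>UNIV. coord_incr x (NGam (blk c)) c (s $ c))"
  by (simp add: model_def sum_coord_incr wnorm_NGam_sq sum_divide_distrib sum_distrib_left)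

lemma pair_model_eq_sum_coord_incr:
  "pair_model x i j s = f x + h x + (\<Sum>c\<in>UNIV. coord_incr x (L i j) c (s $ c))"
  by (simp add: pair_model_def sum_coord_incr power2_norm_vec sum_distrib_left)

lemma model_decrease:
  "(\<Sum>c\<in>UNIV. coord_incr x (NGam (blk c)) c (dir x $ c)) \<le> - (wnorm blk NGam (dir x))\<^sup>2 / 2"
proof -
  define A where "A = (\<Sum>c\<in>UNIV. coord_incr x 0 c (dir x $ c))"
  define B where "B = (wnorm blk NGam (dir x))\<^sup>2"
  have AB: "(\<Sum>c\<in>UNIV. coord_incr x (NGam (blk c)) c (dir x $ c)) = A + B / 2"
    by (subst coord_incr_split) (simp add: A_def B_def wnorm_NGam_sq sum.distrib sum_divide_distrib)
  have "A \<le> - B"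
  proof (rule scaling_optimality_margin)
    show "B \<ge> 0" by (simp add: B_def)
    fix t :: real
    assume t: "0 < t" "t \<le> 1"
    have "a \<bullet> ((1 - t) *\<^sub>R dir x) = 0"
      using dir_minimal[of x] by simp
    then have "model x (dir x) \<le> model x ((1 - t) *\<^sub>R dir x)"
      using dir_minimal[of x] by blast
    also have "\<dots> \<le> f x + h x + (\<Sum>c\<in>UNIV. (1 - t) * coord_incr x 0 c (dir x $ c)
                     + (1 - t)\<^sup>2 * (NGam (blk c) / 2 * (dir x $ c)\<^sup>2))"
      unfolding model_eq_sum_coord_incr using t coord_incr_scaled[of "1 - t"]
      by (intro add_left_mono sum_mono) simp
    also have "\<dots> = f x + h x + ((1 - t) * A + (1 - t)\<^sup>2 * B / 2)"
      by (simp add: A_def B_def wnorm_NGam_sq sum.distrib sum_distrib_left sum_divide_distrib)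
    finally show "A + B / 2 \<le> (1 - t) * A + (1 - t)\<^sup>2 * B / 2"
      using AB by (simp add: model_eq_sum_coord_incr)
  qed
  then show ?thesis
    using AB by (simp add: B_def)
qed

lemma sum_over_blocks: "(\<Sum>c\<in>UNIV. g c) = (\<Sum>i<N. \<Sum>c\<in>{c. blk c = i}. g c)"
  using blk_range by (subst sum.group[symmetric, of UNIV "{..<N}" blk]) auto

definition residual :: "real ^ 'n \<Rightarrow> nat \<Rightarrow> real" where
  "residual x i = (\<Sum>c\<in>{c. blk c = i}. a $ c * dir x $ c)"

definition weight :: "real ^ 'n \<Rightarrow> nat \<Rightarrow> nat \<Rightarrow> real" where
  "weight x = balancing_weight N (residual x)"

definition block_gain :: "real ^ 'n \<Rightarrow> nat \<Rightarrow> nat \<Rightarrow> real" where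
  "block_gain x i j = weight x i j * (\<Sum>c\<in>{c. blk c = i}. coord_incr x (L i j) c (dir x $ c))"

lemma residual_sum_zero: "(\<Sum>i<N. residual x i) = 0"
  using dir_minimal[of x] by (simp add: residual_def sum_over_blocks[symmetric] inner_vec_def)

lemma coord_incr_scale_le:
  assumes "0 \<le> \<kappa>" "\<kappa> \<le> 1" "Lc \<ge> 0"
  shows "coord_incr x Lc c (\<kappa> * t) \<le> \<kappa> * coord_incr x Lc c t"
proof -
  have "\<kappa>\<^sup>2 * (Lc / 2 * t\<^sup>2) \<le> \<kappa> * (Lc / 2 * t\<^sup>2)"
    using assms by (intro mult_right_mono) (auto simp: power2_eq_square mult_left_le_one_le)
  then show ?thesis
    using coord_incr_scaled[OF assms(1,2), of x Lc c t] coord_incr_split[of x Lc c t]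
    by (simp add: algebra_simps)
qed

lemma pair_step_bound:
  assumes ij: "i < N" "j < N" "i \<noteq> j"
  shows "f (x + pdir x (i, j)) + h (x + pdir x (i, j))
           \<le> f x + h x + block_gain x i j + block_gain x j i"
proof -
  define \<kappa> where "\<kappa> c = (if blk c = i then weight x i j else if blk c = j then weight x j i else 0)" for c
  define s where "s = (\<chi> c. \<kappa> c * dir x $ c)"
  have \<kappa>: "0 \<le> \<kappa> c \<and> \<kappa> c \<le> 1" for c
    using balancing_weight_bounds[OF N2 residual_sum_zero] ij by (auto simp: \<kappa>_def weight_def)
  have "s \<in> block_supp blk {i, j}"
    by (simp add: s_def \<kappa>_def block_supp_def)
  moreover have "a \<bullet> s = 0"
  proof -
    have "a \<bullet> s = (\<Sum>c\<in>UNIV. \<kappa> c * (a $ c * dir x $ c))"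
      by (simp add: s_def inner_vec_def algebra_simps)
    also have "\<dots> = weight x i j * residual x i + weight x j i * residual x j"
      unfolding \<kappa>_def sum_two_blocks[OF ij(3)] residual_def ..
    finally show ?thesis
      by (simp add: weight_def balancing_weight_cancel)
  qed
  ultimately have "pair_model x i j (pdir x (i, j)) \<le> pair_model x i j s"
    using pdir_minimal[OF ij(1,2)] by blast
  moreover have "f (x + pdir x (i, j)) + h (x + pdir x (i, j)) \<le> pair_model x i j (pdir x (i, j))"
    using block_lipschitz_descent[OF grad L_lip[OF ij(1,2)]] pdir_minimal[OF ij(1,2)]
    by (simp add: pair_model_def)
  moreover have "pair_model x i j s \<le> f x + h x + (\<Sum>c\<in>UNIV. \<kappa> c * coord_incr x (L i j) c (dir x $ c))"
    unfolding pair_model_eq_sum_coord_incr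
    using \<kappa> L_pos[OF ij(1,2)] by (intro add_left_mono sum_mono) (simp add: s_def coord_incr_scale_le)
  moreover have "(\<Sum>c\<in>UNIV. \<kappa> c * coord_incr x (L i j) c (dir x $ c)) = block_gain x i j + block_gain x j i"
    unfolding \<kappa>_def sum_two_blocks[OF ij(3)] block_gain_def L_sym[OF ij(1,2)] ..
  ultimately show ?thesis
    by linarith
qed

lemma row_gain_bound:
  assumes i: "i < N"
  shows "(\<Sum>j\<in>{..<N} - {i}. block_gain x i j) \<le> (\<Sum>c\<in>{c. blk c = i}. coord_incr x (NGam i) c (dir x $ c))"
proof -
  have w: "0 \<le> weight x i j" "weight x i j \<le> 1" if "j < N" for j
    using balancing_weight_bounds[OF N2 residual_sum_zero that] by (auto simp: weight_def)
  have row: "(\<Sum>j\<in>{..<N} - {i}. weight x i j) = 1"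
    using balancing_weight_row_sum[OF N2 residual_sum_zero i] by (simp add: weight_def)
  have "(\<Sum>j\<in>{..<N} - {i}. weight x i j * L i j) \<le> (\<Sum>j\<in>{..<N} - {i}. L i j)"
    using w L_pos i by (intro sum_mono) (auto intro!: mult_left_le_one_le less_imp_le)
  also have "\<dots> \<le> NGam i"
    unfolding NGam_eq_row_sum[OF i] by (rule sum_mono2) (use L_pos i in \<open>auto intro: less_imp_le\<close>)
  finally have weighted: "(\<Sum>j\<in>{..<N} - {i}. weight x i j * L i j) \<le> NGam i" .
  have "(\<Sum>j\<in>{..<N} - {i}. weight x i j * coord_incr x (L i j) c t) \<le> coord_incr x (NGam i) c t"
    for c t
  proof -
    have "(\<Sum>j\<in>{..<N} - {i}. weight x i j * coord_incr x (L i j) c t)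
        = (\<Sum>j\<in>{..<N} - {i}. weight x i j) * coord_incr x 0 c t
          + (\<Sum>j\<in>{..<N} - {i}. weight x i j * L i j) * (t\<^sup>2 / 2)"
      by (subst coord_incr_split)
        (simp add: distrib_left sum.distrib sum_distrib_left sum_distrib_right sum_divide_distrib mult_ac)
    also have "\<dots> \<le> coord_incr x 0 c t + NGam i * (t\<^sup>2 / 2)"
      using weighted row by (simp add: mult_right_mono)
    finally show ?thesis
      by (simp add: coord_incr_split[of x "NGam i"])
  qed
  then show ?thesis
    unfolding block_gain_def sum_distrib_left by (subst sum.swap) (intro sum_mono)
qed

lemma total_gain_bound:
  "(\<Sum>i<N. \<Sum>j\<in>{..<N} - {i}. block_gain x i j) \<le> - (wnorm blk NGam (dir x))\<^sup>2 / 2"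
proof -
  have "(\<Sum>i<N. \<Sum>j\<in>{..<N} - {i}. block_gain x i j)
      \<le> (\<Sum>i<N. \<Sum>c\<in>{c. blk c = i}. coord_incr x (NGam i) c (dir x $ c))"
    by (intro sum_mono row_gain_bound) simp
  also have "\<dots> = (\<Sum>c\<in>UNIV. coord_incr x (NGam (blk c)) c (dir x $ c))"
    unfolding sum_over_blocks by (intro sum.cong) auto
  also have "\<dots> \<le> - (wnorm blk NGam (dir x))\<^sup>2 / 2"
    by (rule model_decrease)
  finally show ?thesis .
qed

lemma M2_sq: "(M2 N blk L a f grad h x)\<^sup>2 = (wnorm blk NGam (dir x))\<^sup>2 / N"
proof -
  have Gam: "Gam N L (blk c) = NGam (blk c) / N" for c
    using N2 by (simp add: NGam_def)
  have pos: "Gam N L (blk c) > 0" for c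
    using NGam_pos[OF blk_range] N2 by (simp add: Gam)
  have "(M2 N blk L a f grad h x)\<^sup>2 = (\<Sum>c\<in>UNIV. (Gam N L (blk c) * dir x $ c)\<^sup>2 / Gam N L (blk c))"
    unfolding M2_def wnorm_dual_def Dmat_def NGam_def[symmetric] dir_def[symmetric]
    using pos by (subst real_sqrt_pow2) (auto intro!: sum_nonneg divide_nonneg_pos)
  also have "\<dots> = (\<Sum>c\<in>UNIV. Gam N L (blk c) * (dir x $ c)\<^sup>2)"
    using pos by (intro sum.cong) (auto simp: power2_eq_square field_simps less_imp_neq[symmetric])
  also have "\<dots> = (\<Sum>c\<in>UNIV. NGam (blk c) * (dir x $ c)\<^sup>2) / N"
    by (simp add: Gam sum_divide_distrib)
  finally show ?thesis
    by (simp add: wnorm_NGam_sq)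
qed

lemma pdir_swap: "i < N \<Longrightarrow> j < N \<Longrightarrow> pdir x (j, i) = pdir x (i, j)"
  unfolding pdir_def pair_dir_def using L_sym by (simp add: insert_commute)

lemma increasing_pairs: "finite {(i, j). i < j \<and> j < N}" "{(i, j). i < j \<and> j < N} \<noteq> {}"
proof -
  show "finite {(i, j). i < j \<and> j < N}"
    by (rule finite_subset[of _ "{..<N} \<times> {..<N}"]) auto
  have "(0, 1) \<in> {(i, j). i < j \<and> j < N}"
    using N2 by simp
  then show "{(i, j). i < j \<and> j < N} \<noteq> {}"
    by blast
qed

lemma set_pair_pmf: "set_pmf (pair_pmf N) = {(i, j). i < j \<and> j < N}"
  using increasing_pairs by (simp add: pair_pmf_def)

lemma sum_pair_step_decrease:
  "(\<Sum>(i, j)\<in>{(i, j). i < j \<and> j < N}. f (x + pdir x (i, j)) + h (x + pdir x (i, j)) - (f x + h x))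
     \<le> - (wnorm blk NGam (dir x))\<^sup>2 / 2"
proof -
  define g where "g i j = f (x + pdir x (i, j)) + h (x + pdir x (i, j)) - (f x + h x)" for i j
  have g: "g i j \<le> block_gain x i j + block_gain x j i" if "i < N" "j < N" "i \<noteq> j" for i j
    using pair_step_bound[OF that, of x] by (simp add: g_def)
  have "2 * (\<Sum>(i, j)\<in>{(i, j). i < j \<and> j < N}. g i j) = (\<Sum>i<N. \<Sum>j\<in>{..<N} - {i}. g i j)"
    by (rule sum_offdiag_symmetric[symmetric]) (simp add: g_def pdir_swap)
  also have "\<dots> \<le> (\<Sum>i<N. \<Sum>j\<in>{..<N} - {i}. block_gain x i j + block_gain x j i)"
    by (intro sum_mono g) auto
  also have "\<dots> = 2 * (\<Sum>i<N. \<Sum>j\<in>{..<N} - {i}. block_gain x i j)"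
    using sum_offdiag_swap[of "block_gain x" N] by (simp add: sum.distrib)
  also have "\<dots> \<le> - (wnorm blk NGam (dir x))\<^sup>2"
    using total_gain_bound[of x] by simp
  finally show ?thesis
    by (simp add: g_def)
qed

lemma expected_pair_step:
  "measure_pmf.expectation (pair_pmf N) (\<lambda>p. f (x + pdir x p) + h (x + pdir x p))
     \<le> f x + h x - (M2 N blk L a f grad h x)\<^sup>2 / N"
proof -
  define P where "P = {(i, j). i < j \<and> j < N}"
  define S where "S = (\<Sum>(i, j)\<in>P. f (x + pdir x (i, j)) + h (x + pdir x (i, j)) - (f x + h x))"
  define B where "B = (wnorm blk NGam (dir x))\<^sup>2"
  have P: "finite P" "P \<noteq> {}"
    using increasing_pairs by (simp_all add: P_def)
  have cardP: "real (card P) > 0" "2 * real (card P) \<le> real N * real N"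
    using P card_increasing_pairs[of N] by (auto simp: P_def card_gt_0_iff)
  have "(\<Sum>p\<in>P. f (x + pdir x p) + h (x + pdir x p)) = real (card P) * (f x + h x) + S"
    by (simp add: S_def sum.distrib sum_subtractf case_prod_beta)
  then have "measure_pmf.expectation (pair_pmf N) (\<lambda>p. f (x + pdir x p) + h (x + pdir x p))
      = f x + h x + S / card P"
    using cardP(1) unfolding pair_pmf_def P_def[symmetric] integral_pmf_of_set[OF P(2,1)]
    by (simp add: add_divide_distrib)
  also have "\<dots> \<le> f x + h x + (- B / 2) / card P"
    using divide_right_mono[OF sum_pair_step_decrease, of "real (card P)" x]
    by (simp add: S_def P_def B_def)
  also have "\<dots> \<le> f x + h x - B / (real N * real N)"
    using cardP divide_left_mono[of "2 * real (card P)" "real N * real N" B]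
    by (simp add: B_def)
  finally show ?thesis
    by (simp add: M2_sq B_def)
qed

lemma rcd_iter_support:
  "finite (set_pmf (rcd_iter N blk L a f grad h x0 k))
   \<and> (\<forall>y\<in>set_pmf (rcd_iter N blk L a f grad h x0 k). a \<bullet> y = a \<bullet> x0)"
proof (induction k)
  case (Suc k)
  have "a \<bullet> (y + pdir y p) = a \<bullet> y" if "p \<in> set_pmf (pair_pmf N)" for y p
    using that pdir_minimal by (auto simp: set_pair_pmf inner_add_right)
  then show ?case
    using Suc increasing_pairs by (auto simp: set_pair_pmf pdir_def[symmetric])
qed simp

lemma expected_iter_step:
  "measure_pmf.expectation (rcd_iter N blk L a f grad h x0 (Suc k)) (\<lambda>y. f y + h y)
   \<le> measure_pmf.expectation (rcd_iter N blk L a f grad h x0 k) (\<lambda>y. f y + h y)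
     - measure_pmf.expectation (rcd_iter N blk L a f grad h x0 k) (\<lambda>y. (M2 N blk L a f grad h y)\<^sup>2) / N"
  (is "?E (Suc k) \<le> ?E k - ?M k / N")
proof -
  let ?X = "rcd_iter N blk L a f grad h x0 k"
  have fin: "finite (set_pmf ?X)"
    using rcd_iter_support by blast
  have "?E (Suc k) = measure_pmf.expectation ?X
      (\<lambda>x. measure_pmf.expectation (pair_pmf N) (\<lambda>p. f (x + pdir x p) + h (x + pdir x p)))"
    using increasing_pairs
    by (simp add: expectation_bind_pmf_finite[OF fin] set_pair_pmf pdir_def[symmetric])
  also have "\<dots> \<le> measure_pmf.expectation ?X (\<lambda>x. f x + h x - (M2 N blk L a f grad h x)\<^sup>2 / N)"
    by (intro integral_mono integrable_measure_pmf_finite[OF fin] expected_pair_step)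
  also have "\<dots> = ?E k - ?M k / N"
    by (simp add: Bochner_Integration.integral_diff[OF integrable_measure_pmf_finite[OF fin]
          integrable_measure_pmf_finite[OF fin]])
  finally show ?thesis .
qed

lemma sum_expected_M2_sq:
  "(\<Sum>l\<le>k. measure_pmf.expectation (rcd_iter N blk L a f grad h x0 l) (\<lambda>y. (M2 N blk L a f grad h y)\<^sup>2))
   \<le> N * (f x0 + h x0 - measure_pmf.expectation (rcd_iter N blk L a f grad h x0 (Suc k)) (\<lambda>y. f y + h y))"
proof (induction k)
  case 0
  then show ?case
    using expected_iter_step[of x0 0] N2 by (simp add: field_simps)
next
  case (Suc k)
  then show ?case
    using expected_iter_step[of x0 "Suc k"] N2 by (simp add: field_simps)
qed

lemma expected_objective_lower_bound:
  assumes "bdd_below ((\<lambda>x. f x + h x) ` {x. a \<bullet> x = b})" "a \<bullet> x0 = b"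
  shows "Inf ((\<lambda>x. f x + h x) ` {x. a \<bullet> x = b})
     \<le> measure_pmf.expectation (rcd_iter N blk L a f grad h x0 k) (\<lambda>y. f y + h y)"
proof -
  let ?X = "rcd_iter N blk L a f grad h x0 k" and ?I = "Inf ((\<lambda>x. f x + h x) ` {x. a \<bullet> x = b})"
  have fin: "finite (set_pmf ?X)"
    using rcd_iter_support by blast
  have "AE y in measure_pmf ?X. ?I \<le> f y + h y"
    using rcd_iter_support[of x0 k] assms
    by (auto simp: AE_measure_pmf_iff intro!: cINF_lower)
  then have "measure_pmf.expectation ?X (\<lambda>_. ?I) \<le> measure_pmf.expectation ?X (\<lambda>y. f y + h y)"
    by (intro integral_mono_AE integrable_measure_pmf_finite[OF fin])
  then show ?thesis
    by simp
qed

end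

theorem theorem4:
  fixes N :: nat and blk :: "'n::finite \<Rightarrow> nat"
    and f :: "real ^ 'n \<Rightarrow> real" and grad :: "real ^ 'n \<Rightarrow> real ^ 'n"
    and h :: "real ^ 'n \<Rightarrow> real" and hc :: "'n \<Rightarrow> real \<Rightarrow> real"
    and L :: "nat \<Rightarrow> nat \<Rightarrow> real" and a :: "real ^ 'n" and b :: real
    and x0 :: "real ^ 'n" and k :: nat
  assumes N2: "N \<ge> 2"
    and blk_range: "\<forall>c. blk c < N"
    and blk_nonempty: "\<forall>i<N. \<exists>c. blk c = i"
    and a_nz: "a \<noteq> 0"
    and grad: "\<forall>x. (f has_derivative (\<lambda>v. grad x \<bullet> v)) (at x)"
    and L_pos: "\<forall>i<N. \<forall>j<N. L i j > 0"
    and L_sym: "\<forall>i<N. \<forall>j<N. L i j = L j i"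
    and L_lip: "\<forall>i<N. \<forall>j<N. \<forall>x. \<forall>s \<in> block_supp blk {i, j}.
        norm (block_restrict blk {i, j} (grad (x + s) - grad x)) \<le> L i j * norm s"
    and h_sep: "\<forall>x. h x = (\<Sum>c\<in>UNIV. hc c (x $ c))"
    and hc_convex: "\<forall>c. convex_on UNIV (hc c)"
    and Fstar_finite: "bdd_below ((\<lambda>x. f x + h x) ` {x. a \<bullet> x = b})"
    and x0_feas: "a \<bullet> x0 = b"
  shows "Min ((\<lambda>l. measure_pmf.expectation (rcd_iter N blk L a f grad h x0 l)
                    (\<lambda>x. (M2 N blk L a f grad h x)^2)) ` {..k})
         \<le> real N * (f x0 + h x0 - Inf ((\<lambda>x. f x + h x) ` {x. a \<bullet> x = b})) / real (k + 1)"
proof -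
  interpret rcd_problem N blk f grad h hc L a
    using assms by unfold_locales auto
  define e where "e l = measure_pmf.expectation (rcd_iter N blk L a f grad h x0 l)
                    (\<lambda>x. (M2 N blk L a f grad h x)^2)" for l
  have "real (k + 1) * Min (e ` {..k}) \<le> (\<Sum>l\<le>k. e l)"
    using sum_bounded_below[of "{..k}" "Min (e ` {..k})" e] by simp
  also have "\<dots> \<le> N * (f x0 + h x0
      - measure_pmf.expectation (rcd_iter N blk L a f grad h x0 (Suc k)) (\<lambda>y. f y + h y))"
    unfolding e_def by (rule sum_expected_M2_sq)
  also have "\<dots> \<le> N * (f x0 + h x0 - Inf ((\<lambda>x. f x + h x) ` {x. a \<bullet> x = b}))"
    using expected_objective_lower_bound[OF Fstar_finite x0_feas, of "Suc k"]
    by (intro mult_left_mono) auto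
  finally show ?thesis
    unfolding e_def[symmetric] by (simp add: field_simps)
qed

end
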